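(* Let $k\ge 2$, $n\ge 1$. The reduction $\succ$ on $P_k^n$ is terminating (strongly normalizing), but it is not weakly confluent: there exist $f,r,v$ with $f\succ r$, $f\succ v$ such that there is no $w$ with $r\succeq w$ and $v\succeq w$.
   Context: $Z_k=\{0,1,\dots,k-1\}$; $P_k^n$ is the set of all maps $f:Z_k^n\to Z_k$ in the variables $x_1,\dots,x_n$. A variable $x_i$ is essential in $f$ if there are $a_1,\dots,a_n,b\in Z_k$ with $f(a_1,\dots,a_i,\dots,a_n)\ne f(a_1,\dots,a_{i-1},b,a_{i+1},\dots,a_n)$; $Ess(f)$ is the set of essential variables. For an essential variable $x_i$ of $f$ and $c\in Z_k$, the simple subfunction $f(x_i=c)$ is the function obtained by assigning $c$ to $x_i$ (regarded in $P_k^n$ with $x_i$ fictive); we write $f\succ g$ if $g=f(x_i=c)$ for some essential $x_i$ and $c\in Z_k$, and $\succeq$ denotes the reflexive-transitive closure of $\succ$. *)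

theory Defs
  imports Main
begin

text \<open>Z_k^n is modelled as lists of length n with entries < k; variable x_i (1-based)
 corresponds to list index i-1. A function of P_k^n is a map on nat lists that takes
 values < k on the domain and is 0 (canonically) outside, so HOL equality is
 equality of functions on Z_k^n.\<close>

definition Zdom :: "nat \<Rightarrow> nat \<Rightarrow> nat list set" where
  "Zdom k n = {xs. length xs = n \<and> set xs \<subseteq> {..<k}}"

definition Pkn :: "nat \<Rightarrow> nat \<Rightarrow> (nat list \<Rightarrow> nat) set" where
  "Pkn k n = {f. (\<forall>xs\<in>Zdom k n. f xs < k) \<and> (\<forall>xs. xs \<notin> Zdom k n \<longrightarrow> f xs = 0)}"

definition essential :: "nat \<Rightarrow> nat \<Rightarrow> (nat list \<Rightarrow> nat) \<Rightarrow> nat \<Rightarrow> bool" where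
  "essential k n f i \<longleftrightarrow> i < n \<and>
     (\<exists>a\<in>Zdom k n. \<exists>b<k. f a \<noteq> f (a[i := b]))"

definition assign :: "nat \<Rightarrow> nat \<Rightarrow> (nat list \<Rightarrow> nat) \<Rightarrow> nat \<Rightarrow> nat \<Rightarrow> (nat list \<Rightarrow> nat)" where
  "assign k n f i c = (\<lambda>xs. if xs \<in> Zdom k n then f (xs[i := c]) else 0)"

definition red :: "nat \<Rightarrow> nat \<Rightarrow> (nat list \<Rightarrow> nat) \<Rightarrow> (nat list \<Rightarrow> nat) \<Rightarrow> bool" where
  "red k n f g \<longleftrightarrow> f \<in> Pkn k n \<and>
     (\<exists>i c. essential k n f i \<and> c < k \<and> g = assign k n f i c)"

end

theory Submission
  imports Defs
begin

text \<open>Termination: a simple subfunction f(x_i = c) loses the essential variable x_i and gains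
  none, so the number of essential variables strictly decreases along the reduction.
  Non-confluence: the projection x_i reduces to each constant c, and constants have no
  essential variables, so two distinct constants are distinct normal forms.\<close>

lemma list_update_in_Zdom: "a \<in> Zdom k n \<Longrightarrow> b < k \<Longrightarrow> a[j := b] \<in> Zdom k n"
  unfolding Zdom_def using set_update_subset_insert by fastforce

lemma essential_assign_imp_essential:
  assumes "essential k n (assign k n f i c) j" and "c < k"
  shows "essential k n f j"
proof -
  obtain a b where a: "a \<in> Zdom k n" and b: "b < k" and "j < n"
    and ne: "assign k n f i c a \<noteq> assign k n f i c (a[j := b])"
    using assms(1) unfolding essential_def by blast
  have "a[j := b] \<in> Zdom k n" using list_update_in_Zdom a b by blast
  then have ne': "f (a[i := c]) \<noteq> f (a[j := b, i := c])"
    using ne a unfolding assign_def by simp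
  then have "j \<noteq> i" by auto
  then have "a[j := b, i := c] = a[i := c, j := b]" by (simp add: list_update_swap)
  moreover have "a[i := c] \<in> Zdom k n" using list_update_in_Zdom a assms(2) by blast
  ultimately show ?thesis using ne' \<open>j < n\<close> b unfolding essential_def by metis
qed

lemma not_essential_assign: "\<not> essential k n (assign k n f i c) i"
proof
  assume "essential k n (assign k n f i c) i"
  then obtain a b where a: "a \<in> Zdom k n" and b: "b < k"
    and ne: "assign k n f i c a \<noteq> assign k n f i c (a[i := b])"
    unfolding essential_def by blast
  have "a[i := b] \<in> Zdom k n" using list_update_in_Zdom a b by blast
  then show False using ne a unfolding assign_def by simp
qed

lemma red_essential_psubset:
  assumes "red k n f g"
  shows "{j. essential k n g j} \<subset> {j. essential k n f j}"
proof -
  obtain i c where "essential k n f i" and "c < k" and "g = assign k n f i c"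
    using assms unfolding red_def by blast
  then show ?thesis
    using essential_assign_imp_essential not_essential_assign by blast
qed

lemma finite_essential: "finite {j. essential k n f j}"
  by (rule finite_subset[of _ "{..<n}"]) (auto simp: essential_def)

lemma wf_red: "wf {(g, f). red k n f g}"
proof (rule wf_subset[OF wf_measure[of "\<lambda>f. card {j. essential k n f j}"]])
  show "{(g, f). red k n f g} \<subseteq> measure (\<lambda>f. card {j. essential k n f j})"
    by (auto intro!: psubset_card_mono[OF finite_essential] red_essential_psubset)
qed

definition proj :: "nat \<Rightarrow> nat \<Rightarrow> nat \<Rightarrow> nat list \<Rightarrow> nat" where
  "proj k n i = (\<lambda>xs. if xs \<in> Zdom k n then xs ! i else 0)"

definition const :: "nat \<Rightarrow> nat \<Rightarrow> nat \<Rightarrow> nat list \<Rightarrow> nat" where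
  "const k n c = (\<lambda>xs. if xs \<in> Zdom k n then c else 0)"

lemma proj_in_Pkn: "i < n \<Longrightarrow> proj k n i \<in> Pkn k n"
  unfolding Pkn_def proj_def Zdom_def by (auto intro: nth_mem)

lemma essential_proj:
  assumes "i < n" and "k \<ge> 2"
  shows "essential k n (proj k n i) i"
proof -
  let ?z = "replicate n (0::nat)"
  have "?z \<in> Zdom k n" using assms by (simp add: Zdom_def)
  moreover have "?z[i := 1] \<in> Zdom k n"
    using list_update_in_Zdom[OF \<open>?z \<in> Zdom k n\<close>, of 1] assms by simp
  ultimately show ?thesis
    using assms unfolding essential_def
    by (intro conjI bexI[of _ ?z] exI[of _ 1]) (auto simp: proj_def)
qed

lemma assign_proj: "i < n \<Longrightarrow> c < k \<Longrightarrow> assign k n (proj k n i) i c = const k n c"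
proof (rule ext)
  fix xs
  assume "i < n" "c < k"
  show "assign k n (proj k n i) i c xs = const k n c xs"
  proof (cases "xs \<in> Zdom k n")
    case True
    then have "xs[i := c] \<in> Zdom k n" "length xs = n"
      using list_update_in_Zdom \<open>c < k\<close> by (auto simp: Zdom_def)
    then show ?thesis using True \<open>i < n\<close> by (simp add: assign_def proj_def const_def)
  qed (simp add: assign_def const_def)
qed

lemma red_proj_const: "i < n \<Longrightarrow> k \<ge> 2 \<Longrightarrow> c < k \<Longrightarrow> red k n (proj k n i) (const k n c)"
  unfolding red_def using proj_in_Pkn essential_proj assign_proj by metis

lemma not_essential_const: "\<not> essential k n (const k n c) j"
  unfolding essential_def const_def by (auto dest: list_update_in_Zdom)

lemma rtranclp_red_const: "(red k n)\<^sup>*\<^sup>* (const k n c) w \<Longrightarrow> w = const k n c"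
  by (erule converse_rtranclpE) (auto simp: red_def not_essential_const)

lemma const_inj: "n \<ge> 1 \<Longrightarrow> k \<ge> 1 \<Longrightarrow> const k n c = const k n d \<Longrightarrow> c = d"
  unfolding const_def by (drule fun_cong[of _ _ "replicate n 0"]) (simp add: Zdom_def)

theorem theorem3:
  fixes k n :: nat
  assumes "k \<ge> 2" and "n \<ge> 1"
  shows "wf {(g, f). red k n f g}
    \<and> (\<exists>f r v. red k n f r \<and> red k n f v \<and>
          \<not> (\<exists>w. (red k n)\<^sup>*\<^sup>* r w \<and> (red k n)\<^sup>*\<^sup>* v w))"
proof
  show "wf {(g, f). red k n f g}" by (rule wf_red)
next
  have "red k n (proj k n 0) (const k n 0)" "red k n (proj k n 0) (const k n 1)"
    using assms by (auto intro: red_proj_const)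
  moreover have "const k n 0 \<noteq> const k n 1"
    using assms const_inj[of n k 0 1] by auto
  ultimately show "\<exists>f r v. red k n f r \<and> red k n f v \<and>
          \<not> (\<exists>w. (red k n)\<^sup>*\<^sup>* r w \<and> (red k n)\<^sup>*\<^sup>* v w)"
    using rtranclp_red_const by metis
qed

end
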